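(* Let $\gamma>0$. An entire function $f(z)=\sum_{n=0}^\infty a_nz^n$ belongs to $\mathcal{H}_\gamma$ if and only if $$\sum_{k=0}^\infty\frac{k!\,\gamma^{2k}}{2^k}\left|\sum_{j=0}^{\lfloor k/2\rfloor}\frac{a_{k-2j}}{\gamma^{2j}j!}\right|^2<\infty.$$
   Context: For $\gamma>0$, $\mathcal{H}_\gamma$ is the space of entire functions $f$ on $\mathbb{C}$ with $\frac{2}{\pi\gamma^2}\int_{\mathbb{C}}|f(z)|^2\exp\left(\frac{(z-\overline z)^2}{\gamma^2}\right)dA(z)<\infty$, $dA$ Lebesgue measure. *)

theory Defs
  imports "HOL-Complex_Analysis.Complex_Analysis"
begin

text \<open>The weight exp((z - conj z)^2/gamma^2) = exp(-4 (Im z)^2/gamma^2) is real and positive;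
  we take its real part to view it as a real number.\<close>
definition H_space :: "real \<Rightarrow> (complex \<Rightarrow> complex) set" where
  "H_space \<gamma> = {f. f holomorphic_on UNIV \<and>
     (\<integral>\<^sup>+ z. ennreal (2 / (pi * \<gamma>^2) * (cmod (f z))^2 *
        Re (exp ((z - cnj z)^2 / (complex_of_real \<gamma>)^2))) \<partial>lborel) < \<infinity>}"

end

(*
  Put g z = f z * exp (z^2 / gamma^2). Since exp ((z - cnj z)^2 / gamma^2) = exp (-4 (Im z)^2 / gamma^2)
  equals |exp (z^2 / gamma^2)|^2 * exp (-2 |z|^2 / gamma^2), the H_gamma norm of f is the Gaussian
  (Fock space) norm of g. The Taylor coefficients of g are the Cauchy products
  b k = (SUM j <= k div 2. a (k - 2 j) / (gamma^(2 j) * j!)), and the monomials z^k are orthogonal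
  for every rotation invariant weight, so the norm equals SUM k. |b k|^2 * pi * k! * (gamma^2 / 2)^(k + 1).
  Orthogonality comes from the invariance of Lebesgue measure on the plane under rotations, each of
  which is a product of shears; the moments of the Gaussian come from polar coordinates in the form
  of the integral of phi (|z|^2) being pi times the integral of phi over [0, infinity).
*)

theory Submission
  imports Defs "HOL-Probability.Distributions"
begin

section \<open>Rotation invariance of Lebesgue measure on the plane\<close>

lemma distr_comp_eq_self:
  assumes "f \<in> M \<rightarrow>\<^sub>M M" "g \<in> M \<rightarrow>\<^sub>M M" "distr M M f = M" "distr M M g = M"
  shows "distr M M (g \<circ> f) = M"
  using distr_distr[OF assms(2,1)] assms(3,4) by simp

lemma distr_lborel_pair_shear:
  "distr (lborel \<Otimes>\<^sub>M lborel) (lborel \<Otimes>\<^sub>M lborel) (\<lambda>(x, y). (x + c * y, y)) =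
     (lborel \<Otimes>\<^sub>M lborel :: (real \<times> real) measure)"
  (is "distr ?P ?P ?S = ?P")
proof (rule measure_eqI)
  have S: "?S \<in> ?P \<rightarrow>\<^sub>M ?P" by measurable
  fix A assume "A \<in> sets (distr ?P ?P ?S)"
  then have A: "A \<in> sets ?P" by simp
  have "emeasure (distr ?P ?P ?S) A = (\<integral>\<^sup>+y. emeasure lborel ((\<lambda>x. (x + c * y, y)) -` A) \<partial>lborel)"
    using measurable_sets[OF S A]
    by (simp add: emeasure_distr[OF S A] space_pair_measure lborel_pair.emeasure_pair_measure_alt2 vimage_def)
  also have "\<dots> = (\<integral>\<^sup>+y. emeasure (distr lborel borel ((+) (c * y))) ((\<lambda>x. (x, y)) -` A) \<partial>lborel)"
    using sets_Pair2[OF A] by (intro nn_integral_cong, subst emeasure_distr) (auto simp: vimage_def add.commute)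
  also have "\<dots> = emeasure ?P A"
    using A by (simp add: lborel_distr_plus lborel_pair.emeasure_pair_measure_alt2)
  finally show "emeasure (distr ?P ?P ?S) A = emeasure ?P A" .
qed simp

lemma distr_lborel_pair_shear':
  "distr (lborel \<Otimes>\<^sub>M lborel) (lborel \<Otimes>\<^sub>M lborel) (\<lambda>(x, y). (x, y + c * x)) =
     (lborel \<Otimes>\<^sub>M lborel :: (real \<times> real) measure)"
proof -
  let ?P = "lborel \<Otimes>\<^sub>M lborel :: (real \<times> real) measure"
  let ?swap = "\<lambda>(x, y). (y, x)" and ?S = "\<lambda>(x, y). (x + c * y, y)"
  have swap: "?swap \<in> ?P \<rightarrow>\<^sub>M ?P" "distr ?P ?P ?swap = ?P"
    by (measurable, rule lborel_pair.distr_pair_swap[symmetric])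
  have S: "?S \<in> ?P \<rightarrow>\<^sub>M ?P" "distr ?P ?P ?S = ?P"
    by (measurable, rule distr_lborel_pair_shear)
  have "distr ?P ?P (?S \<circ> ?swap) = ?P"
    by (rule distr_comp_eq_self[OF swap(1) S(1) swap(2) S(2)])
  then have "distr ?P ?P (?swap \<circ> (?S \<circ> ?swap)) = ?P"
    by (intro distr_comp_eq_self[OF measurable_comp[OF swap(1) S(1)] swap(1) _ swap(2)])
  moreover have "?swap \<circ> (?S \<circ> ?swap) = (\<lambda>(x, y). (x, y + c * x))"
    by auto
  ultimately show ?thesis
    by (simp only:)
qed

lemma rotation_eq_shears:
  fixes c s :: real
  assumes cs: "c\<^sup>2 + s\<^sup>2 = 1" and "c \<noteq> -1"
  defines "t \<equiv> s / (1 + c)"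
  shows "(\<lambda>(x, y). (c * x - s * y, s * x + c * y)) =
    (\<lambda>(x, y). (x + (- t) * y, y)) \<circ> (\<lambda>(x, y). (x, y + s * x)) \<circ> (\<lambda>(x, y). (x + (- t) * y, y))"
proof -
  have "1 + c \<noteq> 0" using \<open>c \<noteq> -1\<close> by linarith
  have "1 - t * s = c"
    using cs \<open>1 + c \<noteq> 0\<close> unfolding t_def by (simp add: field_simps power2_eq_square)
  have "t * (2 - s * t) = s * (2 * (1 + c) - s\<^sup>2) / (1 + c)\<^sup>2"
    using \<open>1 + c \<noteq> 0\<close> unfolding t_def by (simp add: field_simps power2_eq_square)
  also have "2 * (1 + c) - s\<^sup>2 = (1 + c)\<^sup>2"
    using cs by (simp add: power2_eq_square algebra_simps)
  finally have "t * (2 - s * t) = s"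
    using \<open>1 + c \<noteq> 0\<close> by simp
  have "((\<lambda>(x, y). (x + (- t) * y, y)) \<circ> (\<lambda>(x, y). (x, y + s * x)) \<circ> (\<lambda>(x, y). (x + (- t) * y, y))) (x, y) =
      (x * (1 - t * s) - y * (t * (2 - s * t)), s * x + y * (1 - t * s))" for x y
    by (simp add: algebra_simps)
  then show ?thesis
    unfolding \<open>1 - t * s = c\<close> \<open>t * (2 - s * t) = s\<close> by (auto simp: fun_eq_iff algebra_simps)
qed

lemma distr_lborel_pair_rotation:
  fixes c s :: real
  assumes "c\<^sup>2 + s\<^sup>2 = 1"
  shows "distr (lborel \<Otimes>\<^sub>M lborel) (lborel \<Otimes>\<^sub>M lborel) (\<lambda>(x, y). (c * x - s * y, s * x + c * y)) =
     (lborel \<Otimes>\<^sub>M lborel :: (real \<times> real) measure)"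
proof -
  let ?P = "lborel \<Otimes>\<^sub>M lborel :: (real \<times> real) measure"
  let ?R = "\<lambda>c s (x, y). (c * x - s * y, s * x + c * y :: real)"
  have measurable_R: "?R c s \<in> ?P \<rightarrow>\<^sub>M ?P" for c s
    by measurable
  have shears: "distr ?P ?P (?R c s) = ?P" if "c\<^sup>2 + s\<^sup>2 = 1" and "c \<noteq> -1" for c s
  proof -
    let ?S1 = "\<lambda>(x, y). (x + (- (s / (1 + c))) * y, y)" and ?S2 = "\<lambda>(x, y). (x, y + s * x)"
    have S1: "?S1 \<in> ?P \<rightarrow>\<^sub>M ?P" "distr ?P ?P ?S1 = ?P"
      by (measurable, rule distr_lborel_pair_shear)
    have S2: "?S2 \<in> ?P \<rightarrow>\<^sub>M ?P" "distr ?P ?P ?S2 = ?P"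
      by (measurable, rule distr_lborel_pair_shear')
    have "distr ?P ?P (?S2 \<circ> ?S1) = ?P"
      by (rule distr_comp_eq_self[OF S1(1) S2(1) S1(2) S2(2)])
    then have "distr ?P ?P (?S1 \<circ> (?S2 \<circ> ?S1)) = ?P"
      by (intro distr_comp_eq_self[OF measurable_comp[OF S1(1) S2(1)] S1(1) _ S1(2)])
    then show ?thesis
      by (simp only: rotation_eq_shears[OF that] comp_assoc)
  qed
  show ?thesis
  proof (cases "c = -1")
    case True
    \<comment> \<open>the shear parameter s / (1 + c) blows up; rotate by \<pi>/2 twice instead\<close>
    then have "s = 0" using assms by simp
    then have "?R c s = ?R 0 1 \<circ> ?R 0 1"
      using True by auto
    moreover have "distr ?P ?P (?R 0 1 \<circ> ?R 0 1) = ?P"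
      by (intro distr_comp_eq_self shears measurable_R) simp_all
    ultimately show ?thesis
      by (simp only:)
  qed (use shears assms in blast)
qed

lemma lborel_complex_eq_distr_pair:
  "(lborel :: complex measure) = distr (lborel \<Otimes>\<^sub>M lborel) borel (\<lambda>(x, y). Complex x y)"
proof (rule lborel_eqI)
  have [measurable]: "(\<lambda>(x, y). Complex x y) \<in> borel_measurable (lborel \<Otimes>\<^sub>M lborel)"
    by (simp add: Complex_eq case_prod_beta')
  fix l u :: complex
  assume le: "\<And>b. b \<in> Basis \<Longrightarrow> l \<bullet> b \<le> u \<bullet> b"
  then have "Re l \<le> Re u" "Im l \<le> Im u"
    using le[of 1] le[of \<i>] by (auto simp: inner_complex_def)
  moreover have "(\<lambda>(x, y). Complex x y) -` box l u \<inter> space (lborel \<Otimes>\<^sub>M lborel) =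
      {Re l<..<Re u} \<times> {Im l<..<Im u}"
    by (auto simp: box_def Basis_complex_def inner_complex_def space_pair_measure)
  ultimately show "emeasure (distr (lborel \<Otimes>\<^sub>M lborel) borel (\<lambda>(x, y). Complex x y)) (box l u) =
      (\<Prod>b\<in>Basis. (u - l) \<bullet> b)"
    by (simp add: emeasure_distr lborel.emeasure_pair_measure_Times Basis_complex_def
        inner_complex_def ennreal_mult[symmetric])
qed simp

lemma distr_lborel_mult_unimodular:
  assumes "cmod u = 1"
  shows "distr lborel borel (\<lambda>z. u * z) = (lborel :: complex measure)"
proof -
  let ?P = "lborel \<Otimes>\<^sub>M lborel :: (real \<times> real) measure"
  let ?C = "\<lambda>(x, y). Complex x y" and ?R = "\<lambda>(x, y). (Re u * x - Im u * y, Im u * x + Re u * y)"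
  have [measurable]: "?C \<in> borel_measurable ?P" "?R \<in> ?P \<rightarrow>\<^sub>M ?P"
    by (simp_all add: Complex_eq case_prod_beta')
  have "(Re u)\<^sup>2 + (Im u)\<^sup>2 = 1"
    using assms by (simp add: cmod_def)
  then have "distr ?P borel ?C = distr (distr ?P ?P ?R) borel ?C"
    by (simp only: distr_lborel_pair_rotation)
  also have "\<dots> = distr ?P borel ((\<lambda>z. u * z) \<circ> ?C)"
    by (subst distr_distr) (auto simp: fun_eq_iff complex_eq_iff intro!: arg_cong[where f="distr _ _"])
  also have "\<dots> = distr (distr ?P borel ?C) borel (\<lambda>z. u * z)"
    by (subst distr_distr) simp_all
  finally show ?thesis
    by (simp only: lborel_complex_eq_distr_pair[symmetric])
qed

lemma integral_rotation_character_eq_0: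
  fixes h :: "complex \<Rightarrow> complex"
  assumes "j \<noteq> k" and [measurable]: "h \<in> borel_measurable borel"
    and rot: "\<And>u z. cmod u = 1 \<Longrightarrow> h (u * z) = u ^ j * cnj u ^ k * h z"
  shows "integral\<^sup>L lborel h = 0"
proof -
  define t where "t = pi / (real j - real k)"
  define u where "u = cis t"
  have "u ^ j * cnj u ^ k = cis (real j * t) * cis (real k * - t)"
    by (simp only: u_def cis_cnj Complex.DeMoivre)
  also have "\<dots> = cis ((real j - real k) * t)"
    by (simp add: cis_mult algebra_simps)
  also have "\<dots> = -1"
    using \<open>j \<noteq> k\<close> by (simp add: t_def)
  finally have "u ^ j * cnj u ^ k = -1" .
  have "integral\<^sup>L lborel h = integral\<^sup>L (distr lborel borel (\<lambda>z. u * z)) h"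
    by (simp add: u_def distr_lborel_mult_unimodular)
  also have "\<dots> = integral\<^sup>L lborel (\<lambda>z. h (u * z))"
    by (rule integral_distr) simp_all
  also have "\<dots> = - integral\<^sup>L lborel h"
    using rot[of u] \<open>u ^ j * cnj u ^ k = -1\<close> by (simp add: u_def)
  finally show ?thesis by simp
qed

section \<open>Radial integrals\<close>

lemma emeasure_norm_sq_less:
  "emeasure (lborel :: complex measure) {z. (cmod z)\<^sup>2 < r} = ennreal (pi * max 0 r)"
proof (cases "r > 0")
  case True
  have "{z :: complex. (cmod z)\<^sup>2 < r} = ball 0 (sqrt r)"
  proof (intro set_eqI)
    fix z :: complex
    have "cmod z < sqrt r \<longleftrightarrow> sqrt ((cmod z)\<^sup>2) < sqrt r"
      by simp
    also have "\<dots> \<longleftrightarrow> (cmod z)\<^sup>2 < r"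
      by (rule real_sqrt_less_iff)
    finally show "z \<in> {z. (cmod z)\<^sup>2 < r} \<longleftrightarrow> z \<in> ball 0 (sqrt r)"
      by (simp add: dist_norm)
  qed
  then show ?thesis
    using True by (simp add: emeasure_ball unit_ball_vol_2 mult.commute)
next
  case False
  then have "{z :: complex. (cmod z)\<^sup>2 < r} = {}"
    by (auto simp: not_less) (smt (verit) zero_le_power2)
  then show ?thesis
    using False by simp
qed

lemma distr_lborel_neg_norm_sq:
  "distr (lborel :: complex measure) borel (\<lambda>z. - (cmod z)\<^sup>2) =
    density lborel (\<lambda>t. ennreal pi * indicator {..0} t)"
proof (rule measure_eqI_lessThan)
  fix x :: real
  have "emeasure (distr (lborel :: complex measure) borel (\<lambda>z. - (cmod z)\<^sup>2)) {x<..} =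
      emeasure lborel {z :: complex. (cmod z)\<^sup>2 < - x}"
    by (subst emeasure_distr) (auto intro!: arg_cong2[where f=emeasure])
  also have "\<dots> = ennreal (pi * max 0 (- x))"
    by (rule emeasure_norm_sq_less)
  finally have distr_eq: "emeasure (distr (lborel :: complex measure) borel (\<lambda>z. - (cmod z)\<^sup>2)) {x<..} =
      ennreal (pi * max 0 (- x))" .
  then show "emeasure (distr (lborel :: complex measure) borel (\<lambda>z. - (cmod z)\<^sup>2)) {x<..} < \<infinity>"
    by simp
  have "emeasure (density lborel (\<lambda>t. ennreal pi * indicator {..0} t)) {x<..} =
      (\<integral>\<^sup>+t. ennreal pi * indicator {x<..0} t \<partial>lborel)"
    by (subst emeasure_density) (auto intro!: nn_integral_cong split: split_indicator)
  also have "\<dots> = ennreal pi * emeasure lborel {x<..0}"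
    by (simp add: nn_integral_cmult_indicator)
  also have "\<dots> = ennreal (pi * max 0 (- x))"
  proof (cases "x \<le> 0")
    case True
    then have "max 0 (- x) = - x"
      by simp
    then show ?thesis
      using True by (simp add: ennreal_mult'[symmetric])
  qed simp
  finally show "emeasure (distr (lborel :: complex measure) borel (\<lambda>z. - (cmod z)\<^sup>2)) {x<..} =
      emeasure (density lborel (\<lambda>t. ennreal pi * indicator {..0} t)) {x<..}"
    using distr_eq by simp
qed simp_all

lemma nn_integral_radial_complex:
  fixes \<phi> :: "real \<Rightarrow> ennreal"
  assumes [measurable]: "\<phi> \<in> borel_measurable borel"
  shows "(\<integral>\<^sup>+z. \<phi> ((cmod z)\<^sup>2) \<partial>(lborel :: complex measure)) =
    ennreal pi * (\<integral>\<^sup>+s. \<phi> s * indicator {0..} s \<partial>lborel)"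
proof -
  have "(\<integral>\<^sup>+z. \<phi> ((cmod z)\<^sup>2) \<partial>(lborel :: complex measure)) =
      (\<integral>\<^sup>+z. (\<lambda>t. \<phi> (- t)) (- (cmod z)\<^sup>2) \<partial>(lborel :: complex measure))"
    by simp
  also have "\<dots> = (\<integral>\<^sup>+t. \<phi> (- t) \<partial>distr (lborel :: complex measure) borel (\<lambda>z. - (cmod z)\<^sup>2))"
    by (subst nn_integral_distr) auto
  also have "\<dots> = (\<integral>\<^sup>+t. ennreal pi * (indicator {..0} t * \<phi> (- t)) \<partial>lborel)"
    unfolding distr_lborel_neg_norm_sq by (subst nn_integral_density) (auto simp: mult.assoc)
  also have "\<dots> = ennreal pi * (\<integral>\<^sup>+t. indicator {..0} t * \<phi> (- t) \<partial>lborel)"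
    by (subst nn_integral_cmult) auto
  also have "(\<integral>\<^sup>+t. indicator {..0} t * \<phi> (- t) \<partial>lborel) = (\<integral>\<^sup>+s. \<phi> s * indicator {0..} s \<partial>lborel)"
    by (subst nn_integral_real_affine[where c="-1" and t=0])
       (auto intro!: nn_integral_cong simp: mult.commute split: split_indicator)
  finally show ?thesis .
qed

lemma nn_integral_gaussian_moment_complex:
  assumes "\<alpha> > 0"
  shows "(\<integral>\<^sup>+z. ennreal (cmod z ^ (2 * k) * exp (- \<alpha> * (cmod z)\<^sup>2)) \<partial>(lborel :: complex measure)) =
    ennreal (pi * fact k / \<alpha> ^ (k + 1))"
proof -
  have "(\<integral>\<^sup>+z. ennreal (cmod z ^ (2 * k) * exp (- \<alpha> * (cmod z)\<^sup>2)) \<partial>(lborel :: complex measure)) =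
      (\<integral>\<^sup>+z. (\<lambda>s. ennreal (s ^ k * exp (- \<alpha> * s))) ((cmod z)\<^sup>2) \<partial>(lborel :: complex measure))"
    by (simp add: power_mult)
  also have "\<dots> = ennreal pi * (\<integral>\<^sup>+s. ennreal (s ^ k * exp (- \<alpha> * s)) * indicator {0..} s \<partial>lborel)"
    by (rule nn_integral_radial_complex) auto
  also have "(\<integral>\<^sup>+s. ennreal (s ^ k * exp (- \<alpha> * s)) * indicator {0..} s \<partial>lborel) =
      ennreal (1 / \<alpha>) * (\<integral>\<^sup>+x. ennreal ((x / \<alpha>) ^ k * exp (- x)) * indicator {0..} x \<partial>lborel)"
  proof -
    have ind: "indicator {0..} (x / \<alpha>) = (indicator {0..} x :: ennreal)" for x
      using assms by (auto simp: zero_le_divide_iff split: split_indicator)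
    show ?thesis
      using assms by (subst nn_integral_real_affine[where c="1 / \<alpha>" and t=0]) (auto simp: ind)
  qed
  also have "(\<integral>\<^sup>+x. ennreal ((x / \<alpha>) ^ k * exp (- x)) * indicator {0..} x \<partial>lborel) =
      (\<integral>\<^sup>+x. ennreal (1 / \<alpha> ^ k) * (ennreal (x ^ k * exp (- x)) * indicator {0..} x) \<partial>lborel)"
    using assms
    by (intro nn_integral_cong) (auto simp: ennreal_mult'[symmetric] power_divide split: split_indicator)
  also have "\<dots> = ennreal (1 / \<alpha> ^ k) * ennreal (fact k)"
    by (subst nn_integral_cmult) (auto simp: nn_intergal_power_times_exp_Ici)
  finally show ?thesis
    using assms by (simp add: ennreal_mult'[symmetric] ennreal_mult[symmetric] field_simps)
qed

section \<open>Gaussian norms of entire functions\<close>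

lemma sums_integral_dominated:
  fixes c :: "nat \<Rightarrow> complex" and \<phi> :: "nat \<Rightarrow> 'a \<Rightarrow> complex"
  assumes int: "\<And>k. integrable M (\<phi> k)"
    and sums: "\<And>x. (\<lambda>k. c k * \<phi> k x) sums F x"
    and bound: "\<And>k x. norm (\<phi> k x) \<le> R ^ k * \<psi> x"
    and int_\<psi>: "integrable M \<psi>"
    and summable: "summable (\<lambda>k. norm (c k) * R ^ k)"
  shows "(\<lambda>k. c k * integral\<^sup>L M (\<phi> k)) sums integral\<^sup>L M F"
proof -
  have bound': "norm (c k * \<phi> k x) \<le> norm (c k) * R ^ k * \<psi> x" for k x
    using bound[of k x] by (simp add: norm_mult mult.assoc mult_left_mono)
  have int': "integrable M (\<lambda>x. c k * \<phi> k x)" for k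
    using int by simp
  have "(\<integral>x. norm (c k * \<phi> k x) \<partial>M) \<le> norm (c k) * R ^ k * integral\<^sup>L M \<psi>" for k
    using integral_mono[OF integrable_norm[OF int'] _ bound', of k] int_\<psi> by simp
  then have summable_int: "summable (\<lambda>k. \<integral>x. norm (c k * \<phi> k x) \<partial>M)"
    by (intro summable_comparison_test[OF _ summable_mult2[OF summable]]) auto
  have "summable (\<lambda>k. norm (c k * \<phi> k x))" for x
    by (intro summable_comparison_test[OF _ summable_mult2[OF summable, of "\<psi> x"]]) (use bound' in auto)
  then have "(\<integral>x. (\<Sum>k. c k * \<phi> k x) \<partial>M) = (\<Sum>k. integral\<^sup>L M (\<lambda>x. c k * \<phi> k x))"
    by (intro integral_suminf[OF int' _ summable_int]) auto
  moreover have "(\<lambda>x. \<Sum>k. c k * \<phi> k x) = F"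
    using sums by (simp add: sums_unique[symmetric] fun_eq_iff)
  moreover have "summable (\<lambda>k. c k * integral\<^sup>L M (\<phi> k))"
    by (rule summable_comparison_test[OF _ summable_int])
       (use integral_norm_bound[of M "\<lambda>x. c _ * \<phi> _ x"] in auto)
  ultimately show ?thesis
    by (simp add: summable_sums)
qed

lemma integrable_indicator_cball:
  fixes h :: "'a::euclidean_space \<Rightarrow> 'b::{banach, second_countable_topology}"
  assumes "continuous_on UNIV h"
  shows "integrable lborel (\<lambda>z. indicator (cball 0 R) z *\<^sub>R h z)"
  using assms by (intro borel_integrable_compact) (auto intro: continuous_on_subset)

lemma norm_indicator_cball_scaleR_le:
  fixes p h :: complex
  assumes "norm p = cmod z ^ k"
  shows "norm (indicator (cball 0 R) z *\<^sub>R (p * h)) \<le> R ^ k * (indicator (cball 0 R) z * norm h)"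
proof (cases "z \<in> cball 0 R")
  case True
  then have "cmod z ^ k \<le> R ^ k"
    by (simp add: power_mono)
  then show ?thesis
    using True assms by (simp add: norm_mult mult_right_mono)
qed simp

lemma integral_cball_monomial_orthogonal:
  fixes w :: "complex \<Rightarrow> real"
  assumes "j \<noteq> k" and "continuous_on UNIV w" and w_rot: "\<And>u z. cmod u = 1 \<Longrightarrow> w (u * z) = w z"
  shows "(\<integral>z. indicator (cball 0 R) z *\<^sub>R (z ^ j * cnj z ^ k * of_real (w z)) \<partial>lborel) = 0"
proof (rule integral_rotation_character_eq_0[OF \<open>j \<noteq> k\<close>])
  have "integrable lborel (\<lambda>z. indicator (cball 0 R) z *\<^sub>R (z ^ j * cnj z ^ k * of_real (w z)))"
    using assms(2) by (intro integrable_indicator_cball continuous_intros)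
  then show "(\<lambda>z. indicator (cball 0 R) z *\<^sub>R (z ^ j * cnj z ^ k * of_real (w z))) \<in> borel_measurable borel"
    using borel_measurable_integrable by simp
  fix u z :: complex
  assume "cmod u = 1"
  then show "indicator (cball 0 R) (u * z) *\<^sub>R ((u * z) ^ j * cnj (u * z) ^ k * of_real (w (u * z))) =
      u ^ j * cnj u ^ k * (indicator (cball 0 R) z *\<^sub>R (z ^ j * cnj z ^ k * of_real (w z)))"
    by (simp add: w_rot norm_mult indicator_def power_mult_distrib mult_ac)
qed

lemma nn_integral_cball_eq_integral:
  fixes h :: "'a::euclidean_space \<Rightarrow> real"
  assumes "continuous_on UNIV h" and "\<And>z. 0 \<le> h z"
  shows "(\<integral>\<^sup>+z. ennreal (h z) * indicator (cball 0 R) z \<partial>lborel) =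
    ennreal (\<integral>z. indicator (cball 0 R) z * h z \<partial>lborel)"
proof -
  have "(\<integral>\<^sup>+z. ennreal (h z) * indicator (cball 0 R) z \<partial>lborel) =
      (\<integral>\<^sup>+z. ennreal (indicator (cball 0 R) z * h z) \<partial>lborel)"
    by (intro nn_integral_cong) (simp split: split_indicator)
  also have "\<dots> = ennreal (\<integral>z. indicator (cball 0 R) z * h z \<partial>lborel)"
    using integrable_indicator_cball[OF assms(1)] assms(2)
    by (intro nn_integral_eq_integral) (auto intro!: AE_I2)
  finally show ?thesis .
qed

lemma integral_indicator_scaleR_of_real:
  fixes h :: "'a::euclidean_space \<Rightarrow> real"
  shows "(\<integral>z. indicator A z *\<^sub>R complex_of_real (h z) \<partial>lborel) =
    of_real (\<integral>z. indicator A z * h z \<partial>lborel)"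
  by (simp add: scaleR_conv_of_real flip: of_real_mult integral_complex_of_real)

context
  fixes g :: "complex \<Rightarrow> complex" and b :: "nat \<Rightarrow> complex" and w :: "complex \<Rightarrow> real" and R :: real
  assumes g_sums: "\<And>z. (\<lambda>k. b k * z ^ k) sums g z" and g_cont: "continuous_on UNIV g"
    and w_cont: "continuous_on UNIV w" and w_nonneg: "\<And>z. 0 \<le> w z"
    and w_rot: "\<And>u z. cmod u = 1 \<Longrightarrow> w (u * z) = w z"
    and R_nonneg: "R \<ge> 0"
begin

lemma summable_norm_coeff_mult_power: "summable (\<lambda>k. cmod (b k) * R ^ k)"
proof -
  have "summable (\<lambda>k. norm (b k * complex_of_real R ^ k))"
    by (rule powser_insidea[OF sums_summable[OF g_sums[of "of_real (R + 1)"]]]) (use R_nonneg in simp)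
  then show ?thesis
    using R_nonneg by (simp add: norm_mult norm_power)
qed

lemma integral_cball_conj_power_series:
  "(\<integral>z. indicator (cball 0 R) z *\<^sub>R (z ^ j * cnj (g z) * of_real (w z)) \<partial>lborel) =
    cnj (b j) * (\<integral>z. indicator (cball 0 R) z *\<^sub>R (z ^ j * cnj z ^ j * of_real (w z)) \<partial>lborel)"
proof -
  let ?I = "\<lambda>k. \<integral>z. indicator (cball 0 R) z *\<^sub>R (z ^ j * cnj z ^ k * of_real (w z)) \<partial>lborel"
  have series: "(\<lambda>k. cnj (b k) * ?I k) sums
      (\<integral>z. indicator (cball 0 R) z *\<^sub>R (z ^ j * cnj (g z) * of_real (w z)) \<partial>lborel)"
  proof (rule sums_integral_dominated[where \<psi>="\<lambda>z. indicator (cball 0 R) z * (cmod z ^ j * w z)"])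
    show "integrable lborel (\<lambda>z. indicator (cball 0 R) z *\<^sub>R (z ^ j * cnj z ^ k * of_real (w z)))" for k
      using w_cont by (intro integrable_indicator_cball continuous_intros)
    show "integrable lborel (\<lambda>z. indicator (cball 0 R) z * (cmod z ^ j * w z))"
      using integrable_indicator_cball[of "\<lambda>z. cmod z ^ j * w z"] w_cont
      by (simp add: continuous_intros)
    show "summable (\<lambda>k. cmod (cnj (b k)) * R ^ k)"
      using summable_norm_coeff_mult_power by simp
    fix z
    have "(\<lambda>k. cnj (b k * z ^ k)) sums cnj (g z)"
      using g_sums[of z] by (simp only: sums_cnj)
    from sums_mult2[OF this, of "indicator (cball 0 R) z *\<^sub>R (z ^ j * of_real (w z))"]
    show "(\<lambda>k. cnj (b k) * (indicator (cball 0 R) z *\<^sub>R (z ^ j * cnj z ^ k * of_real (w z)))) sums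
        (indicator (cball 0 R) z *\<^sub>R (z ^ j * cnj (g z) * of_real (w z)))"
      by (simp add: algebra_simps)
  next
    fix k z
    show "cmod (indicator (cball 0 R) z *\<^sub>R (z ^ j * cnj z ^ k * of_real (w z))) \<le>
        R ^ k * (indicator (cball 0 R) z * (cmod z ^ j * w z))"
      using norm_indicator_cball_scaleR_le[of "cnj z ^ k" z k R "z ^ j * of_real (w z)"]
      by (simp add: norm_mult norm_power w_nonneg mult_ac)
  qed
  have "(\<lambda>k. cnj (b k) * ?I k) = (\<lambda>k. if k = j then cnj (b j) * ?I j else 0)"
    using integral_cball_monomial_orthogonal[OF _ w_cont w_rot, of j] by (auto simp: fun_eq_iff)
  then have "(\<lambda>k. cnj (b k) * ?I k) sums (cnj (b j) * ?I j)"
    using sums_single[of j "\<lambda>_. cnj (b j) * ?I j"] by (simp only:)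
  then show ?thesis
    by (rule sums_unique2[OF series])
qed

lemma sums_integral_cball_norm_sq:
  "(\<lambda>j. b j * (\<integral>z. indicator (cball 0 R) z *\<^sub>R (z ^ j * cnj (g z) * of_real (w z)) \<partial>lborel)) sums
    (\<integral>z. indicator (cball 0 R) z *\<^sub>R (g z * cnj (g z) * of_real (w z)) \<partial>lborel)"
proof (rule sums_integral_dominated[where \<psi>="\<lambda>z. indicator (cball 0 R) z * (cmod (g z) * w z)"])
  show "integrable lborel (\<lambda>z. indicator (cball 0 R) z *\<^sub>R (z ^ j * cnj (g z) * of_real (w z)))" for j
    using w_cont g_cont by (intro integrable_indicator_cball continuous_intros)
  show "integrable lborel (\<lambda>z. indicator (cball 0 R) z * (cmod (g z) * w z))"
    using integrable_indicator_cball[of "\<lambda>z. cmod (g z) * w z"] w_cont g_cont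
    by (simp add: continuous_intros)
  show "summable (\<lambda>k. cmod (b k) * R ^ k)"
    by (rule summable_norm_coeff_mult_power)
  fix z
  from sums_mult2[OF g_sums[of z], of "indicator (cball 0 R) z *\<^sub>R (cnj (g z) * of_real (w z))"]
  show "(\<lambda>k. b k * (indicator (cball 0 R) z *\<^sub>R (z ^ k * cnj (g z) * of_real (w z)))) sums
      (indicator (cball 0 R) z *\<^sub>R (g z * cnj (g z) * of_real (w z)))"
    by (simp add: algebra_simps)
next
  fix k z
  show "cmod (indicator (cball 0 R) z *\<^sub>R (z ^ k * cnj (g z) * of_real (w z))) \<le>
      R ^ k * (indicator (cball 0 R) z * (cmod (g z) * w z))"
    using norm_indicator_cball_scaleR_le[of "z ^ k" z k R "cnj (g z) * of_real (w z)"]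
    by (simp add: norm_mult norm_power w_nonneg mult_ac)
qed

lemma nn_integral_cball_norm_sq_power_series:
  "(\<integral>\<^sup>+z. ennreal ((cmod (g z))\<^sup>2 * w z) * indicator (cball 0 R) z \<partial>lborel) =
    (\<Sum>k. ennreal ((cmod (b k))\<^sup>2) *
      (\<integral>\<^sup>+z. ennreal (cmod z ^ (2 * k) * w z) * indicator (cball 0 R) z \<partial>lborel))"
proof -
  define J where "J k = (\<integral>z. indicator (cball 0 R) z * (cmod z ^ (2 * k) * w z) \<partial>lborel)" for k
  define L where "L = (\<integral>z. indicator (cball 0 R) z * ((cmod (g z))\<^sup>2 * w z) \<partial>lborel)"
  have "z ^ k * cnj z ^ k = of_real (cmod z ^ (2 * k))" for z :: complex and k
    by (simp add: power_mult power_mult_distrib[symmetric] flip: complex_norm_square)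
  then have I: "(\<integral>z. indicator (cball 0 R) z *\<^sub>R (z ^ k * cnj z ^ k * of_real (w z)) \<partial>lborel) =
      of_real (J k)" for k
    by (simp add: J_def flip: integral_indicator_scaleR_of_real)
  have coeff: "b k * cnj (b k) * of_real (J k) = of_real ((cmod (b k))\<^sup>2 * J k)" for k
    by (simp flip: complex_norm_square)
  have terms: "(\<lambda>j. b j * (\<integral>z. indicator (cball 0 R) z *\<^sub>R (z ^ j * cnj (g z) * of_real (w z)) \<partial>lborel)) =
      (\<lambda>k. of_real ((cmod (b k))\<^sup>2 * J k))"
    by (simp only: integral_cball_conj_power_series I mult.assoc[symmetric] coeff)
  have "g z * cnj (g z) * of_real (w z) = of_real ((cmod (g z))\<^sup>2 * w z)" for z
    by (simp flip: complex_norm_square)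
  then have sum: "(\<integral>z. indicator (cball 0 R) z *\<^sub>R (g z * cnj (g z) * of_real (w z)) \<partial>lborel) = of_real L"
    by (simp only: L_def integral_indicator_scaleR_of_real)
  have "(\<lambda>k. complex_of_real ((cmod (b k))\<^sup>2 * J k)) sums complex_of_real L"
    using sums_integral_cball_norm_sq by (simp only: terms sum)
  then have sums_L: "(\<lambda>k. (cmod (b k))\<^sup>2 * J k) sums L"
    by (simp only: sums_of_real_iff)
  have J_nonneg: "J k \<ge> 0" for k
    unfolding J_def by (rule integral_nonneg_AE) (simp add: w_nonneg)
  have J: "(\<integral>\<^sup>+z. ennreal (cmod z ^ (2 * k) * w z) * indicator (cball 0 R) z \<partial>lborel) = ennreal (J k)" for k
    unfolding J_def using w_cont w_nonneg by (intro nn_integral_cball_eq_integral continuous_intros) auto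
  have "(\<integral>\<^sup>+z. ennreal ((cmod (g z))\<^sup>2 * w z) * indicator (cball 0 R) z \<partial>lborel) = ennreal L"
    unfolding L_def using w_cont w_nonneg g_cont by (intro nn_integral_cball_eq_integral continuous_intros) auto
  also have "\<dots> = (\<Sum>k. ennreal ((cmod (b k))\<^sup>2 * J k))"
    by (rule suminf_ennreal_eq[OF _ sums_L, symmetric]) (simp add: J_nonneg)
  finally show ?thesis
    by (simp add: J ennreal_mult J_nonneg)
qed

end

lemma nn_integral_eq_SUP_cball:
  fixes h :: "'a::euclidean_space \<Rightarrow> ennreal"
  assumes [measurable]: "h \<in> borel_measurable borel"
  shows "(\<integral>\<^sup>+z. h z \<partial>lborel) = (SUP n. \<integral>\<^sup>+z. h z * indicator (cball 0 (real n)) z \<partial>lborel)"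
proof -
  have [measurable]: "cball (0 :: 'a) r \<in> sets borel" for r
    by simp
  have "(SUP n. h z * indicator (cball 0 (real n)) z) = h z" for z
  proof (rule antisym)
    show "(SUP n. h z * indicator (cball 0 (real n)) z) \<le> h z"
      by (rule SUP_least) (simp split: split_indicator)
    obtain n :: nat where "norm z \<le> real n"
      using real_arch_simple by blast
    then show "h z \<le> (SUP n. h z * indicator (cball 0 (real n)) z)"
      by (intro SUP_upper2[of n]) simp_all
  qed
  then have "(\<integral>\<^sup>+z. h z \<partial>lborel) = (\<integral>\<^sup>+z. (SUP n. h z * indicator (cball 0 (real n)) z) \<partial>lborel)"
    by simp
  also have "\<dots> = (SUP n. \<integral>\<^sup>+z. h z * indicator (cball 0 (real n)) z \<partial>lborel)"
  proof (rule nn_integral_monotone_convergence_SUP)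
    show "incseq (\<lambda>n z. h z * indicator (cball 0 (real n)) z)"
      by (auto simp: incseq_def le_fun_def split: split_indicator)
  qed measurable
  finally show ?thesis .
qed

lemma nn_integral_gaussian_norm_sq_power_series:
  fixes g :: "complex \<Rightarrow> complex" and b :: "nat \<Rightarrow> complex"
  assumes sums: "\<And>z. (\<lambda>k. b k * z ^ k) sums g z" and cont: "continuous_on UNIV g" and "\<alpha> > 0"
  shows "(\<integral>\<^sup>+z. ennreal ((cmod (g z))\<^sup>2 * exp (- \<alpha> * (cmod z)\<^sup>2)) \<partial>lborel) =
    (\<Sum>k. ennreal ((cmod (b k))\<^sup>2 * (pi * fact k / \<alpha> ^ (k + 1))))"
proof -
  let ?w = "\<lambda>z. exp (- \<alpha> * (cmod z)\<^sup>2)"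
  let ?c = "\<lambda>k. ennreal ((cmod (b k))\<^sup>2)"
  let ?M = "\<lambda>k n. \<integral>\<^sup>+z. ennreal (cmod z ^ (2 * k) * ?w z) * indicator (cball 0 (real n)) z \<partial>lborel"
  \<comment> \<open>termwise integration needs the bound |z|^k \<le> R^k, hence the truncation to discs\<close>
  have disc: "(\<integral>\<^sup>+z. ennreal ((cmod (g z))\<^sup>2 * ?w z) * indicator (cball 0 (real n)) z \<partial>lborel) =
      (\<Sum>k. ?c k * ?M k n)" for n
    by (rule nn_integral_cball_norm_sq_power_series[OF sums cont])
       (auto simp: norm_mult intro!: continuous_intros)
  have [measurable]: "g \<in> borel_measurable borel"
    using cont by (rule borel_measurable_continuous_onI)
  have "incseq (\<lambda>n. ?c k * ?M k n)" for k
    by (auto simp: incseq_def intro!: mult_left_mono nn_integral_mono split: split_indicator)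
  have "(\<integral>\<^sup>+z. ennreal ((cmod (g z))\<^sup>2 * ?w z) \<partial>lborel) =
      (SUP n. \<integral>\<^sup>+z. ennreal ((cmod (g z))\<^sup>2 * ?w z) * indicator (cball 0 (real n)) z \<partial>lborel)"
    by (rule nn_integral_eq_SUP_cball) measurable
  also have "\<dots> = (SUP n. \<Sum>k. ?c k * ?M k n)"
    by (simp only: disc)
  also have "\<dots> = (\<Sum>k. SUP n. ?c k * ?M k n)"
    by (rule ennreal_suminf_SUP_eq[symmetric]) fact
  also have "\<dots> = (\<Sum>k. ?c k * (SUP n. ?M k n))"
    by (simp only: SUP_mult_left_ennreal)
  also have "\<dots> = (\<Sum>k. ?c k * (\<integral>\<^sup>+z. ennreal (cmod z ^ (2 * k) * ?w z) \<partial>lborel))"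
    by (subst nn_integral_eq_SUP_cball) simp_all
  also have "\<dots> = (\<Sum>k. ennreal ((cmod (b k))\<^sup>2 * (pi * fact k / \<alpha> ^ (k + 1))))"
    using \<open>\<alpha> > 0\<close>
    by (simp only: nn_integral_gaussian_moment_complex ennreal_mult'[symmetric] zero_le_power2)
  finally show ?thesis .
qed

section \<open>The space H\<gamma>\<close>

lemma exp_sq_div_sums:
  fixes c z :: complex
  shows "(\<lambda>n. (if even n then 1 / (c ^ n * fact (n div 2)) else 0) * z ^ n) sums exp (z\<^sup>2 / c\<^sup>2)"
proof -
  let ?e = "\<lambda>n. (if even n then 1 / (c ^ n * fact (n div 2)) else 0) * z ^ n"
  have "(\<lambda>m. (z\<^sup>2 / c\<^sup>2) ^ m /\<^sub>R fact m) sums exp (z\<^sup>2 / c\<^sup>2)"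
    by (rule exp_converges)
  moreover have "(z\<^sup>2 / c\<^sup>2) ^ m /\<^sub>R fact m = ?e (2 * m)" for m
  proof -
    have "(z\<^sup>2 / c\<^sup>2) ^ m = z ^ (2 * m) / c ^ (2 * m)"
      by (simp add: power_divide power_mult)
    then show ?thesis
      by (simp add: scaleR_conv_of_real divide_inverse mult_ac)
  qed
  ultimately have "(\<lambda>m. ?e (2 * m)) sums exp (z\<^sup>2 / c\<^sup>2)"
    by simp
  moreover have "strict_mono (\<lambda>m :: nat. 2 * m)"
    by (auto simp: strict_mono_def)
  moreover have "?e n = 0" if "n \<notin> range (\<lambda>m :: nat. 2 * m)" for n
    using that by (auto elim!: evenE)
  ultimately show ?thesis
    using sums_mono_reindex[of "\<lambda>m :: nat. 2 * m" ?e] by blast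
qed

lemma sum_convolution_even_support:
  fixes a e :: "nat \<Rightarrow> 'a::semiring_0"
  assumes odd_0: "\<And>n. odd n \<Longrightarrow> e n = 0"
  shows "(\<Sum>i\<le>k. a i * e (k - i)) = (\<Sum>j = 0..k div 2. a (k - 2 * j) * e (2 * j))"
proof -
  have "(\<Sum>i\<le>k. a i * e (k - i)) = (\<Sum>m\<le>k. a (k - m) * e m)"
    by (rule sum.reindex_bij_witness[of _ "\<lambda>m. k - m" "\<lambda>i. k - i"]) auto
  also have "\<dots> = (\<Sum>m\<in>(\<lambda>j. 2 * j) ` {0..k div 2}. a (k - m) * e m)"
  proof (rule sum.mono_neutral_right)
    show "(\<lambda>j. 2 * j) ` {0..k div 2} \<subseteq> {..k}"
      by auto
    show "\<forall>m\<in>{..k} - (\<lambda>j. 2 * j) ` {0..k div 2}. a (k - m) * e m = 0"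
    proof
      fix m assume m: "m \<in> {..k} - (\<lambda>j. 2 * j) ` {0..k div 2}"
      have "odd m"
      proof
        assume "even m"
        then have "m = 2 * (m div 2)" and "m div 2 \<in> {0..k div 2}"
          using m by (auto intro: div_le_mono)
        then show False
          using m by blast
      qed
      then show "a (k - m) * e m = 0"
        by (simp add: odd_0)
    qed
  qed simp
  also have "\<dots> = (\<Sum>j = 0..k div 2. a (k - 2 * j) * e (2 * j))"
    by (subst sum.reindex) (auto simp: inj_on_def)
  finally show ?thesis .
qed

lemma sums_mult_exp_sq_div:
  fixes c :: complex and a :: "nat \<Rightarrow> complex"
  assumes sums: "\<And>z. (\<lambda>n. a n * z ^ n) sums f z"
  shows "(\<lambda>k. (\<Sum>j = 0..k div 2. a (k - 2 * j) / (c ^ (2 * j) * fact j)) * z ^ k) sums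
    (f z * exp (z\<^sup>2 / c\<^sup>2))"
proof -
  define e where "e n = (if even n then 1 / (c ^ n * fact (n div 2)) else 0)" for n
  have e_sums: "(\<lambda>n. e n * w ^ n) sums exp (w\<^sup>2 / c\<^sup>2)" for w
    unfolding e_def by (rule exp_sq_div_sums)
  have "norm z < norm (of_real (cmod z + 1) :: complex)"
    by simp
  note absolutely = powser_insidea[OF sums_summable[OF sums] this] powser_insidea[OF sums_summable[OF e_sums] this]
  have "(\<lambda>k. \<Sum>i\<le>k. (a i * z ^ i) * (e (k - i) * z ^ (k - i))) sums (f z * exp (z\<^sup>2 / c\<^sup>2))"
    using Cauchy_product_sums[OF absolutely] sums_unique[OF sums[of z]] sums_unique[OF e_sums[of z]]
    by simp
  moreover have "(\<Sum>i\<le>k. (a i * z ^ i) * (e (k - i) * z ^ (k - i))) =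
      (\<Sum>j = 0..k div 2. a (k - 2 * j) / (c ^ (2 * j) * fact j)) * z ^ k" for k
  proof -
    have "(\<Sum>i\<le>k. (a i * z ^ i) * (e (k - i) * z ^ (k - i))) = (\<Sum>i\<le>k. a i * e (k - i)) * z ^ k"
      by (auto simp: sum_distrib_right intro!: sum.cong simp flip: power_add mult.assoc)
    also have "(\<Sum>i\<le>k. a i * e (k - i)) = (\<Sum>j = 0..k div 2. a (k - 2 * j) * e (2 * j))"
      by (rule sum_convolution_even_support) (simp add: e_def)
    finally show ?thesis
      by (simp add: e_def)
  qed
  ultimately show ?thesis
    by simp
qed

lemma Re_exp_H_weight:
  fixes \<gamma> :: real and z :: complex
  shows "Re (exp ((z - cnj z)\<^sup>2 / (complex_of_real \<gamma>)\<^sup>2)) =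
    (cmod (exp (z\<^sup>2 / (complex_of_real \<gamma>)\<^sup>2)))\<^sup>2 * exp (- (2 / \<gamma>\<^sup>2) * (cmod z)\<^sup>2)"
proof -
  have "(z - cnj z)\<^sup>2 / (complex_of_real \<gamma>)\<^sup>2 = of_real (- 4 * (Im z)\<^sup>2 / \<gamma>\<^sup>2)"
    by (simp add: complex_eq_iff power2_eq_square)
  moreover have "cmod (exp (z\<^sup>2 / (complex_of_real \<gamma>)\<^sup>2)) = exp (((Re z)\<^sup>2 - (Im z)\<^sup>2) / \<gamma>\<^sup>2)"
    by (simp add: power2_eq_square)
  moreover have "2 * (((Re z)\<^sup>2 - (Im z)\<^sup>2) / \<gamma>\<^sup>2) - 2 / \<gamma>\<^sup>2 * (cmod z)\<^sup>2 = - 4 * (Im z)\<^sup>2 / \<gamma>\<^sup>2"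
    by (simp add: cmod_power2 diff_divide_distrib add_divide_distrib)
  ultimately show ?thesis
    by (simp only: Re_complex_of_real exp_of_real power2_eq_square exp_add[symmetric]) simp
qed

lemma nn_integral_H_space_weight:
  fixes \<gamma> :: real and f :: "complex \<Rightarrow> complex" and b :: "nat \<Rightarrow> complex"
  assumes "\<gamma> > 0" and cont: "continuous_on UNIV f"
    and sums: "\<And>z. (\<lambda>k. b k * z ^ k) sums (f z * exp (z\<^sup>2 / (complex_of_real \<gamma>)\<^sup>2))"
  shows "(\<integral>\<^sup>+z. ennreal (2 / (pi * \<gamma>\<^sup>2) * (cmod (f z))\<^sup>2 *
      Re (exp ((z - cnj z)\<^sup>2 / (complex_of_real \<gamma>)\<^sup>2))) \<partial>lborel) =
    (\<Sum>k. ennreal (fact k * \<gamma> ^ (2 * k) / 2 ^ k * (cmod (b k))\<^sup>2))"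
proof -
  define C where "C = 2 / (pi * \<gamma>\<^sup>2)"
  define \<alpha> where "\<alpha> = 2 / \<gamma>\<^sup>2"
  define g where "g z = f z * exp (z\<^sup>2 / (complex_of_real \<gamma>)\<^sup>2)" for z
  have "C > 0" "\<alpha> > 0"
    using \<open>\<gamma> > 0\<close> by (simp_all add: C_def \<alpha>_def)
  have g_cont: "continuous_on UNIV g"
    unfolding g_def using cont \<open>\<gamma> > 0\<close> by (intro continuous_intros) auto
  have "C * ((cmod (b k))\<^sup>2 * (pi * fact k / \<alpha> ^ (k + 1))) =
      fact k * \<gamma> ^ (2 * k) / 2 ^ k * (cmod (b k))\<^sup>2" for k
    using \<open>\<gamma> > 0\<close>
    by (simp add: C_def \<alpha>_def power_divide power_mult power2_eq_square power_mult_distrib field_simps)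
  then have terms: "ennreal C * ennreal ((cmod (b k))\<^sup>2 * (pi * fact k / \<alpha> ^ (k + 1))) =
      ennreal (fact k * \<gamma> ^ (2 * k) / 2 ^ k * (cmod (b k))\<^sup>2)" for k
    using \<open>C > 0\<close> by (simp only: ennreal_mult'[symmetric] less_imp_le)
  have "(\<integral>\<^sup>+z. ennreal (2 / (pi * \<gamma>\<^sup>2) * (cmod (f z))\<^sup>2 *
      Re (exp ((z - cnj z)\<^sup>2 / (complex_of_real \<gamma>)\<^sup>2))) \<partial>lborel) =
      (\<integral>\<^sup>+z. ennreal C * ennreal ((cmod (g z))\<^sup>2 * exp (- \<alpha> * (cmod z)\<^sup>2)) \<partial>lborel)"
    using \<open>C > 0\<close>
    by (intro nn_integral_cong)
       (simp add: Re_exp_H_weight C_def \<alpha>_def g_def norm_mult power_mult_distrib ennreal_mult[symmetric] mult_ac)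
  also have "\<dots> = ennreal C * (\<integral>\<^sup>+z. ennreal ((cmod (g z))\<^sup>2 * exp (- \<alpha> * (cmod z)\<^sup>2)) \<partial>lborel)"
    using g_cont by (subst nn_integral_cmult) (auto intro!: borel_measurable_continuous_onI continuous_intros)
  also have "\<dots> = ennreal C * (\<Sum>k. ennreal ((cmod (b k))\<^sup>2 * (pi * fact k / \<alpha> ^ (k + 1))))"
    by (simp only: nn_integral_gaussian_norm_sq_power_series[OF sums[folded g_def] g_cont \<open>\<alpha> > 0\<close>])
  also have "\<dots> = (\<Sum>k. ennreal (fact k * \<gamma> ^ (2 * k) / 2 ^ k * (cmod (b k))\<^sup>2))"
    by (simp only: ennreal_suminf_cmult[symmetric] terms)
  finally show ?thesis .
qed

theorem mainTheorem7:
  fixes \<gamma> :: real and f :: "complex \<Rightarrow> complex" and a :: "nat \<Rightarrow> complex"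
  assumes "\<gamma> > 0"
    and "f holomorphic_on UNIV"
    and "\<And>z. (\<lambda>n. a n * z ^ n) sums f z"
  shows "f \<in> H_space \<gamma> \<longleftrightarrow>
    summable (\<lambda>k. fact k * \<gamma> ^ (2 * k) / 2 ^ k *
      (cmod (\<Sum>j = 0..k div 2. a (k - 2 * j) / (complex_of_real \<gamma> ^ (2 * j) * fact j)))^2)"
proof -
  define b where "b k = (\<Sum>j = 0..k div 2. a (k - 2 * j) / (complex_of_real \<gamma> ^ (2 * j) * fact j))" for k
  define T where "T k = fact k * \<gamma> ^ (2 * k) / 2 ^ k * (cmod (b k))\<^sup>2" for k
  have T_nonneg: "T k \<ge> 0" for k
    using assms(1) by (simp add: T_def)
  have sums: "(\<lambda>k. b k * z ^ k) sums (f z * exp (z\<^sup>2 / (complex_of_real \<gamma>)\<^sup>2))" for z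
    unfolding b_def by (rule sums_mult_exp_sq_div[OF assms(3)])
  have "continuous_on UNIV f"
    using assms(2) by (rule holomorphic_on_imp_continuous_on)
  then have "f \<in> H_space \<gamma> \<longleftrightarrow> (\<Sum>k. ennreal (T k)) < \<infinity>"
    using assms(2) unfolding H_space_def mem_Collect_eq T_def
    by (simp only: nn_integral_H_space_weight[OF assms(1) _ sums] simp_thms)
  also have "\<dots> \<longleftrightarrow> summable T"
    using summable_suminf_not_top[OF T_nonneg] ennreal_suminf_neq_top[OF _ T_nonneg]
    by (auto simp: less_top)
  finally show ?thesis
    unfolding T_def b_def .
qed

end
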